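(* Let $N$ be the six-dimensional connected, simply connected nilpotent Lie group with Lie algebra $\mathfrak n$ described in the context, and consider the co-adjoint action of $N$ on $\mathfrak n^*$, $\ell\mapsto \ell\circ \mathrm{Ad}(n^{-1})$. Each co-adjoint orbit of $N$ contains exactly one element $\ell=(\omega,\lambda)$, $\lambda=(\lambda_1,\lambda_2)$, satisfying one of the following: (i) $\lambda_2\neq 0$ and $\omega=0$; (ii) $\lambda_2=0$, $\lambda_1\neq 0$ and $\omega\in \mathbb R X_2\oplus\mathbb R Y_2$; (iii) $\lambda_1=\lambda_2=0$ and $\omega\in\mathfrak v$ arbitrary.
   Context: $\mathfrak n$ is the real Lie algebra with basis $X_1,Y_1,X_2,Y_2,T_1,T_2$ whose only nonzero brackets (up to skew-symmetry) are $[X_1,Y_1]=T_1$, $[X_1,X_2]=T_2$, $[Y_1,Y_2]=T_2$. Write $\mathfrak v=\mathbb R X_1\oplus\mathbb R Y_1\oplus\mathbb R X_2\oplus\mathbb R Y_2$ and $\mathfrak z=\mathbb R T_1\oplus\mathbb R T_2$ (the centre), each with the scalar product making the given basis orthonormal. Every $\ell\in\mathfrak n^*$ is written $\ell=(\omega,\lambda)$ where $\omega$ and $\lambda$ are the restrictions of $\ell$ to $\mathfrak v$ and $\mathfrak z$, identified with vectors $\omega\in\mathfrak v$ and $\lambda=\lambda_1T_1+\lambda_2T_2\in\mathfrak z$ via these scalar products. *)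

theory Defs
  imports "HOL-Analysis.Analysis"
begin

text \<open>The Lie algebra n = v (+) z.  An element of v is written
  (x1, y1, x2, y2) meaning x1 X1 + y1 Y1 + x2 X2 + y2 Y2, an element of z is
  (t1, t2) meaning t1 T1 + t2 T2.  The standard inner product on these product
  types makes the given bases orthonormal.\<close>

type_synonym vv = "real \<times> real \<times> real \<times> real"
type_synonym zz = "real \<times> real"
type_synonym nn = "vv \<times> zz"

text \<open>Bracket on v with values in z:
  [X1,Y1] = T1, [X1,X2] = T2, [Y1,Y2] = T2, all other basis brackets zero.\<close>
fun vbr :: "vv \<Rightarrow> vv \<Rightarrow> zz" where
  "vbr (a1, b1, a2, b2) (c1, d1, c2, d2) =
     (a1 * d1 - b1 * c1, (a1 * c2 - a2 * c1) + (b1 * d2 - b2 * d1))"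

definition lie_br :: "nn \<Rightarrow> nn \<Rightarrow> nn" where
  "lie_br U W = (0, vbr (fst U) (fst W))"

text \<open>The connected, simply connected group N, realised on the underlying
  space of n via the exponential map (a global diffeomorphism); the group law
  is the Baker-Campbell-Hausdorff product, which for this 2-step nilpotent
  algebra is exactly U * W = U + W + 1/2 [U,W].\<close>
definition nmul :: "nn \<Rightarrow> nn \<Rightarrow> nn" where
  "nmul U W = U + W + (1/2) *\<^sub>R lie_br U W"

definition ninv :: "nn \<Rightarrow> nn" where
  "ninv U = - U"

text \<open>Adjoint representation: differential at the identity (= 0) of
  conjugation by g, transported to n via exp (whose differential at 0 is id).\<close>
definition Ad :: "nn \<Rightarrow> nn \<Rightarrow> nn" where
  "Ad g = frechet_derivative (\<lambda>Y. nmul (nmul g Y) (ninv g)) (at 0)"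

text \<open>A functional l in n* is identified with a vector (omega, lambda) in n via
  the scalar product: l(Y) = (omega, lambda) \<bullet> Y.  Co-adjoint orbit of l:
  all l o Ad(g^{-1}), g in N.\<close>
definition coadj_orbit :: "nn \<Rightarrow> nn set" where
  "coadj_orbit l = {l'. \<exists>g. \<forall>Y. l' \<bullet> Y = l \<bullet> Ad (ninv g) Y}"

end

theory Submission
  imports Defs
begin

text \<open>Since \<open>\<mathfrak>n\<close> is 2-step nilpotent, conjugation by \<open>g\<close> is the linear map
  \<open>Y \<mapsto> Y + [g, Y]\<close>, so \<open>Ad g = id + ad g\<close>. Hence the centre part \<open>\<lambda>\<close> of
  \<open>\<ell> = (\<omega>, \<lambda>)\<close> is invariant, and \<open>\<omega>\<close> is moved by an arbitrary vector of the
  image of \<open>(a\<^sub>1, b\<^sub>1, a\<^sub>2, b\<^sub>2) \<mapsto> (\<lambda>\<^sub>1 b\<^sub>1 + \<lambda>\<^sub>2 a\<^sub>2, \<lambda>\<^sub>2 b\<^sub>2 - \<lambda>\<^sub>1 a\<^sub>1, -\<lambda>\<^sub>2 a\<^sub>1, -\<lambda>\<^sub>2 b\<^sub>1)\<close>.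
  This image is all of \<open>\<mathfrak>v\<close> if \<open>\<lambda>\<^sub>2 \<noteq> 0\<close>, is \<open>\<real>X\<^sub>1 \<oplus> \<real>Y\<^sub>1\<close> if \<open>\<lambda>\<^sub>2 = 0 \<noteq> \<lambda>\<^sub>1\<close>,
  and is zero if \<open>\<lambda> = 0\<close>; in each case the subspace of \<open>\<mathfrak>v\<close> prescribed in
  (i)--(iii) is a complement of it, so it meets the affine orbit exactly once.\<close>

lemma nn_cases: obtains a1 b1 a2 b2 s1 s2 where "(g::nn) = ((a1, b1, a2, b2), (s1, s2))"
  by (cases g) auto

lemma nmul_conjugate: "nmul (nmul g Y) (ninv g) = Y + lie_br g Y"
proof -
  obtain a1 b1 a2 b2 s1 s2 where "g = ((a1, b1, a2, b2), (s1, s2))" by (rule nn_cases)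
  moreover obtain c1 d1 c2 d2 u1 u2 where "Y = ((c1, d1, c2, d2), (u1, u2))" by (rule nn_cases)
  ultimately show ?thesis by (simp add: nmul_def ninv_def lie_br_def algebra_simps)
qed

lemma linear_lie_br: "linear (lie_br g)"
proof (rule linearI)
  fix x y :: nn and c :: real
  obtain a1 b1 a2 b2 s1 s2 where g: "g = ((a1, b1, a2, b2), (s1, s2))" by (rule nn_cases)
  obtain c1 d1 c2 d2 u1 u2 where x: "x = ((c1, d1, c2, d2), (u1, u2))" by (rule nn_cases)
  obtain e1 f1 e2 f2 v1 v2 where y: "y = ((e1, f1, e2, f2), (v1, v2))" by (rule nn_cases)
  show "lie_br g (x + y) = lie_br g x + lie_br g y"
    unfolding g x y by (simp add: lie_br_def algebra_simps)
  show "lie_br g (c *\<^sub>R x) = c *\<^sub>R lie_br g x"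
    unfolding g x by (simp add: lie_br_def algebra_simps)
qed

lemma Ad_eq: "Ad g = (\<lambda>Y. Y + lie_br g Y)"
proof -
  have "bounded_linear (\<lambda>Y. Y + lie_br g Y)"
    unfolding linear_conv_bounded_linear[symmetric]
    using linear_compose_add[OF linear_id linear_lie_br] by (simp add: id_def)
  then have "((\<lambda>Y. nmul (nmul g Y) (ninv g)) has_derivative (\<lambda>Y. Y + lie_br g Y)) (at 0)"
    unfolding nmul_conjugate by (rule bounded_linear_imp_has_derivative)
  then show ?thesis
    unfolding Ad_def by (rule frechet_derivative_at[symmetric])
qed

text \<open>The vector representing \<open>\<ell> \<circ> Ad(g\<^sup>-\<^sup>1)\<close>; only the \<open>\<mathfrak>v\<close>-part of \<open>g\<close> matters.\<close>

definition coadj :: "nn \<Rightarrow> nn \<Rightarrow> nn" where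
  "coadj l g = (case l of ((x1, y1, x2, y2), (t1, t2)) \<Rightarrow>
     (case g of ((a1, b1, a2, b2), _) \<Rightarrow>
       ((x1 + t1 * b1 + t2 * a2, y1 - t1 * a1 + t2 * b2, x2 - t2 * a1, y2 - t2 * b1), (t1, t2))))"

lemma inner_Ad_ninv: "l \<bullet> Ad (ninv g) Y = coadj l g \<bullet> Y"
proof -
  obtain a1 b1 a2 b2 s1 s2 where "g = ((a1, b1, a2, b2), (s1, s2))" by (rule nn_cases)
  moreover obtain c1 d1 c2 d2 u1 u2 where "Y = ((c1, d1, c2, d2), (u1, u2))" by (rule nn_cases)
  moreover obtain x1 y1 x2 y2 t1 t2 where "l = ((x1, y1, x2, y2), (t1, t2))" by (rule nn_cases)
  ultimately show ?thesis
    by (simp add: Ad_eq coadj_def lie_br_def ninv_def algebra_simps)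
qed

lemma coadj_orbit_eq_range: "coadj_orbit l = range (coadj l)"
  unfolding coadj_orbit_def inner_Ad_ninv vector_eq_rdot by blast

lemma coadj_orbit_iff:
  "l0 \<in> coadj_orbit ((x1, y1, x2, y2), (t1, t2)) \<longleftrightarrow> (\<exists>a1 b1 a2 b2.
     l0 = ((x1 + t1 * b1 + t2 * a2, y1 - t1 * a1 + t2 * b2, x2 - t2 * a1, y2 - t2 * b1), (t1, t2)))"
  (is "_ \<longleftrightarrow> (\<exists>a1 b1 a2 b2. l0 = ?F a1 b1 a2 b2)")
proof
  assume "l0 \<in> coadj_orbit ((x1, y1, x2, y2), (t1, t2))"
  then obtain g where l0: "l0 = coadj ((x1, y1, x2, y2), (t1, t2)) g"
    unfolding coadj_orbit_eq_range by blast
  obtain a1 b1 a2 b2 s1 s2 where "g = ((a1, b1, a2, b2), (s1, s2))" by (rule nn_cases)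
  with l0 have "l0 = ?F a1 b1 a2 b2" by (simp add: coadj_def)
  then show "\<exists>a1 b1 a2 b2. l0 = ?F a1 b1 a2 b2" by blast
next
  assume "\<exists>a1 b1 a2 b2. l0 = ?F a1 b1 a2 b2"
  then obtain a1 b1 a2 b2 where "l0 = ?F a1 b1 a2 b2" by blast
  then have "l0 = coadj ((x1, y1, x2, y2), (t1, t2)) ((a1, b1, a2, b2), (0, 0))"
    by (simp add: coadj_def)
  then show "l0 \<in> coadj_orbit ((x1, y1, x2, y2), (t1, t2))"
    unfolding coadj_orbit_eq_range by blast
qed

definition normal_form :: "nn \<Rightarrow> bool" where
  "normal_form l0 = (case l0 of ((x1, y1, x2, y2), (lam1, lam2)) \<Rightarrow>
        (lam2 \<noteq> 0 \<and> (x1, y1, x2, y2) = (0, 0, 0, 0))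
      \<or> (lam2 = 0 \<and> lam1 \<noteq> 0 \<and> x1 = 0 \<and> y1 = 0)
      \<or> (lam1 = 0 \<and> lam2 = 0))"

definition orbit_rep :: "nn \<Rightarrow> nn" where
  "orbit_rep l = (case l of ((x1, y1, x2, y2), (t1, t2)) \<Rightarrow>
     if t2 \<noteq> 0 then ((0, 0, 0, 0), (t1, t2))
     else if t1 \<noteq> 0 then ((0, 0, x2, y2), (t1, 0))
     else l)"

lemma orbit_rep_in_coadj_orbit: "orbit_rep l \<in> coadj_orbit l"
proof -
  obtain x1 y1 x2 y2 t1 t2 where l: "l = ((x1, y1, x2, y2), (t1, t2))" by (rule nn_cases)
  consider (i) "t2 \<noteq> 0" | (ii) "t2 = 0" "t1 \<noteq> 0" | (iii) "t2 = 0" "t1 = 0" by blast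
  then show ?thesis
  proof cases
    case i
    \<comment> \<open>solve the last two coordinates for \<open>a\<^sub>1, b\<^sub>1\<close>, then the first two for \<open>a\<^sub>2, b\<^sub>2\<close>\<close>
    let ?a1 = "x2 / t2" and ?b1 = "y2 / t2"
    have "orbit_rep l = ((x1 + t1 * ?b1 + t2 * (- (x1 + t1 * ?b1) / t2),
        y1 - t1 * ?a1 + t2 * (- (y1 - t1 * ?a1) / t2), x2 - t2 * ?a1, y2 - t2 * ?b1), (t1, t2))"
      using i by (simp add: l orbit_rep_def)
    then show ?thesis unfolding l coadj_orbit_iff by blast
  next
    case ii
    have "orbit_rep l = ((x1 + t1 * (- x1 / t1) + t2 * 0, y1 - t1 * (y1 / t1) + t2 * 0,
        x2 - t2 * (y1 / t1), y2 - t2 * (- x1 / t1)), (t1, t2))"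
      using ii by (simp add: l orbit_rep_def)
    then show ?thesis unfolding l coadj_orbit_iff by blast
  next
    case iii
    have "orbit_rep l = ((x1 + t1 * 0 + t2 * 0, y1 - t1 * 0 + t2 * 0,
        x2 - t2 * 0, y2 - t2 * 0), (t1, t2))"
      using iii by (simp add: l orbit_rep_def)
    then show ?thesis unfolding l coadj_orbit_iff by blast
  qed
qed

lemma normal_form_orbit_rep: "normal_form (orbit_rep l)"
  by (cases l rule: nn_cases) (simp add: orbit_rep_def normal_form_def)

lemma normal_form_unique:
  assumes "l0 \<in> coadj_orbit l" and "normal_form l0"
  shows "l0 = orbit_rep l"
proof -
  obtain x1 y1 x2 y2 t1 t2 where l: "l = ((x1, y1, x2, y2), (t1, t2))" by (rule nn_cases)
  from assms(1) obtain a1 b1 a2 b2 where "l0 =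
     ((x1 + t1 * b1 + t2 * a2, y1 - t1 * a1 + t2 * b2, x2 - t2 * a1, y2 - t2 * b1), (t1, t2))"
    unfolding l coadj_orbit_iff by blast
  with assms(2) show ?thesis
    by (cases "t2 = 0"; cases "t1 = 0") (simp_all add: l normal_form_def orbit_rep_def)
qed

theorem lemma3p1:
  fixes l :: nn
  shows "\<exists>!l0. l0 \<in> coadj_orbit l \<and>
    (case l0 of ((x1, y1, x2, y2), (lam1, lam2)) \<Rightarrow>
        (lam2 \<noteq> 0 \<and> (x1, y1, x2, y2) = (0, 0, 0, 0))
      \<or> (lam2 = 0 \<and> lam1 \<noteq> 0 \<and> x1 = 0 \<and> y1 = 0)
      \<or> (lam1 = 0 \<and> lam2 = 0))"
proof -
  have "\<exists>!l0. l0 \<in> coadj_orbit l \<and> normal_form l0"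
    using orbit_rep_in_coadj_orbit normal_form_orbit_rep normal_form_unique by blast
  then show ?thesis unfolding normal_form_def .
qed

end
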